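(* Let $(q_l)_{l\ge1}$ be positive numbers with $q_1=1$ and $0<R:=\lim_{l\to\infty}q_l/q_{l+1}<\infty$, and assume (NEQ): $\tilde f(1)<1$, or $\tilde f(1)=1$ and $\tilde g(1)=\infty$. Let $\rho^*>0$. Then $$\inf\{\tilde A(z):\ z\in X_{0+},\ \rho(z)=\rho^*\}=0,$$ and this infimum is not attained by any $z\in X_{0+}$ with $\rho(z)=\rho^*$.
   Context: $X=\{z=(z_l)_{l\ge1}:\sum_l l|z_l|<\infty\}$, $X_{0+}$ its nonnegative elements, $\rho(z)=\sum_l lz_l$, $N(z)=\sum_l z_l$. Set $\tilde q_l=q_lR^l$, $\tilde f(\mu)=\sum_{l\ge1}\tilde q_l\mu^l$, $\tilde g(\mu)=\sum_{l\ge1}l\tilde q_l\mu^l$, $\tilde f(1)=\sum_l\tilde q_l\in(0,\infty]$, $\tilde g(1)=\sum_l l\tilde q_l\in(0,\infty]$. For $z\in X_{0+}\setminus\{0\}$, $\tilde A(z)=\sum_l z_l\ln\big(z_l/(\tilde q_lN(z))\big)$ with $0\ln0=0$, and $\tilde A(0)=0$. *)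

theory Defs
  imports "HOL-Analysis.Analysis"
begin

(* Sequences z = (z_l)_{l>=1} are represented as functions nat => real;
   the unused index 0 is fixed to 0 in the carrier X_{0+}. *)

definition X0plus :: "(nat \<Rightarrow> real) set" where
  "X0plus = {z. z 0 = 0 \<and> (\<forall>l\<ge>1. 0 \<le> z l) \<and>
                summable (\<lambda>l. real (Suc l) * \<bar>z (Suc l)\<bar>)}"

definition rho :: "(nat \<Rightarrow> real) \<Rightarrow> real" where
  "rho z = (\<Sum>l. real (Suc l) * z (Suc l))"

definition Nmass :: "(nat \<Rightarrow> real) \<Rightarrow> real" where
  "Nmass z = (\<Sum>l. z (Suc l))"

definition qt :: "(nat \<Rightarrow> real) \<Rightarrow> real \<Rightarrow> nat \<Rightarrow> real" where
  "qt q R l = q l * R ^ l"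

(* tilde A(z) = sum_{l>=1} z_l ln(z_l / (tilde q_l N(z))), with 0 ln 0 = 0
   (automatic, since 0 * ln _ = 0), and tilde A(0) = 0 *)
definition Atilde :: "(nat \<Rightarrow> real) \<Rightarrow> real \<Rightarrow> (nat \<Rightarrow> real) \<Rightarrow> real" where
  "Atilde q R z = (if z = (\<lambda>_. 0) then 0 else
     (\<Sum>l. z (Suc l) * ln (z (Suc l) / (qt q R (Suc l) * Nmass z))))"

(* condition (NEQ): f~(1) < 1, or f~(1) = 1 and g~(1) = infinity
   (f~(1), g~(1) are sums of nonnegative terms, so "< infinity" = summable) *)
definition NEQ :: "(nat \<Rightarrow> real) \<Rightarrow> real \<Rightarrow> bool" where
  "NEQ q R \<longleftrightarrow>
     (summable (\<lambda>l. qt q R (Suc l)) \<and> (\<Sum>l. qt q R (Suc l)) < 1) \<or>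
     (summable (\<lambda>l. qt q R (Suc l)) \<and> (\<Sum>l. qt q R (Suc l)) = 1 \<and>
      \<not> summable (\<lambda>l. real (Suc l) * qt q R (Suc l)))"

end

(*
  For z \<noteq> 0 with mass N = N(z), Atilde(z) is N times the relative entropy of the probability
  z/N with respect to the sub-probability qt, so Gibbs' inequality gives
  Atilde(z) \<ge> N (1 - ft(1)) \<ge> 0, with equality only if ft(1) = 1 and z = N qt. Under (NEQ) the
  latter forces rho(z) = N gt(1) = \<infinity>, so Atilde is strictly positive on the constraint set.
  On the other hand, putting all the density rhostar on the single size k costs
  Atilde = - rhostar ln(qt k) / k, which tends to 0 because qt (k+1) / qt k \<rightarrow> 1; the same ratio
  limit bounds qt from below by e^(-B l), which makes the entropy series summable.
*)
theory Submission
  imports Defs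
begin

lemma ln_less_minus_one:
  fixes t :: real
  assumes "0 < t" "t \<noteq> 1"
  shows "ln t < t - 1"
proof -
  have "sqrt t \<noteq> 1" using assms by simp
  then have "0 < (sqrt t - 1)\<^sup>2" by simp
  have "ln t = 2 * ln (sqrt t)" using assms by (simp add: ln_sqrt)
  also have "\<dots> \<le> 2 * (sqrt t - 1)" using assms ln_le_minus_one[of "sqrt t"] by simp
  also have "\<dots> = t - 1 - (sqrt t - 1)\<^sup>2" using assms by (simp add: power2_eq_square algebra_simps)
  also have "\<dots> < t - 1" using \<open>0 < (sqrt t - 1)\<^sup>2\<close> by simp
  finally show ?thesis .
qed

lemma diff_less_x_ln_div:
  fixes x y :: real
  assumes "0 \<le> x" "0 < y" "x \<noteq> y"
  shows "x - y < x * ln (x / y)"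
proof (cases "x = 0")
  case False
  then have "0 < x" using assms by simp
  have "ln (y / x) < y / x - 1"
    using assms \<open>0 < x\<close> by (intro ln_less_minus_one) auto
  then have "x * (1 - y / x) < x * ln (x / y)"
    using assms \<open>0 < x\<close> by (simp add: ln_div)
  then show ?thesis using \<open>0 < x\<close> by (simp add: algebra_simps)
qed (use assms in simp)

lemma diff_le_x_ln_div:
  fixes x y :: real
  assumes "0 \<le> x" "0 < y"
  shows "x - y \<le> x * ln (x / y)"
  using assms diff_less_x_ln_div[of x y] by (cases "x = y") auto

lemma gibbs_inequality:
  fixes p q :: "nat \<Rightarrow> real"
  assumes "\<And>l. 0 \<le> p l" "\<And>l. 0 < q l"
    and "summable p" "summable q" "summable (\<lambda>l. p l * ln (p l / q l))"
  shows "suminf p - suminf q \<le> (\<Sum>l. p l * ln (p l / q l))"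
    and "p \<noteq> q \<Longrightarrow> suminf p - suminf q < (\<Sum>l. p l * ln (p l / q l))"
proof -
  define gap where "gap l = p l * ln (p l / q l) - (p l - q l)" for l
  have gap_nonneg: "0 \<le> gap l" for l
    using diff_le_x_ln_div[of "p l" "q l"] assms by (simp add: gap_def)
  have "gap sums ((\<Sum>l. p l * ln (p l / q l)) - (suminf p - suminf q))"
    unfolding gap_def using assms by (intro sums_diff summable_sums) auto
  then have gap_sum: "summable gap"
    and suminf_gap: "suminf gap = (\<Sum>l. p l * ln (p l / q l)) - (suminf p - suminf q)"
    by (auto simp: sums_iff)
  show "suminf p - suminf q \<le> (\<Sum>l. p l * ln (p l / q l))"
    using suminf_nonneg[OF gap_sum gap_nonneg] suminf_gap by simp
  assume "p \<noteq> q"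
  then obtain i where "p i \<noteq> q i" by auto
  then have "0 < gap i"
    using diff_less_x_ln_div[of "p i" "q i"] assms by (simp add: gap_def)
  then show "suminf p - suminf q < (\<Sum>l. p l * ln (p l / q l))"
    using suminf_pos2[OF gap_sum gap_nonneg] suminf_gap by simp
qed

text \<open>Summability is not automatic: a divergent series has suminf 0 in HOL, so Gibbs'
  inequality can only be applied to Atilde once its terms are known to be summable.\<close>

lemma summable_x_ln_div:
  fixes p q :: "nat \<Rightarrow> real" and B :: real
  assumes p_nonneg: "\<And>l. 0 \<le> p l" and q_pos: "\<And>l. 0 < q l" and "summable q"
    and moment: "summable (\<lambda>l. real (Suc l) * p l)"
    and q_exp_lower: "\<And>l. - ln (q l) \<le> B * real (Suc l)"
  shows "summable (\<lambda>l. p l * ln (p l / q l))"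
proof (rule summable_comparison_test')
  define M where "M = (\<Sum>l. real (Suc l) * p l)"
  have p_le_M: "p l \<le> M" for l
  proof -
    have "p l \<le> (\<Sum>k\<in>{l}. real (Suc k) * p k)" using p_nonneg[of l] by (simp add: distrib_right)
    also have "\<dots> \<le> M"
      unfolding M_def using moment p_nonneg by (intro sum_le_suminf) auto
    finally show ?thesis .
  qed
  have upper: "p l * ln (p l / q l) \<le> \<bar>M + B\<bar> * (real (Suc l) * p l)" for l
  proof (cases "p l = 0")
    case False
    then have "0 < p l" using p_nonneg[of l] by simp
    have "ln (p l / q l) = ln (p l) - ln (q l)" using \<open>0 < p l\<close> q_pos[of l] by (simp add: ln_div)
    also have "\<dots> \<le> M * real (Suc l) + B * real (Suc l)"
      using ln_le_minus_one[OF \<open>0 < p l\<close>] p_le_M[of l] q_exp_lower[of l]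
        mult_left_mono[of 1 "real (Suc l)" M] p_nonneg[of l]
      by simp
    also have "\<dots> \<le> \<bar>M + B\<bar> * real (Suc l)" by (simp flip: distrib_right)
    finally have "p l * ln (p l / q l) \<le> p l * (\<bar>M + B\<bar> * real (Suc l))"
      using p_nonneg by (rule mult_left_mono)
    then show ?thesis by (simp only: ac_simps)
  qed simp
  show "norm (p l * ln (p l / q l)) \<le> q l + \<bar>M + B\<bar> * (real (Suc l) * p l)" for l
  proof -
    have "0 \<le> \<bar>M + B\<bar> * (real (Suc l) * p l)" using p_nonneg[of l] by simp
    then show ?thesis
      using upper[of l] diff_le_x_ln_div[OF p_nonneg[of l] q_pos[of l]] p_nonneg[of l] q_pos[of l]
      unfolding real_norm_def abs_le_iff by (intro conjI) linarith+
  qed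
  show "summable (\<lambda>l. q l + \<bar>M + B\<bar> * (real (Suc l) * p l))"
    using \<open>summable q\<close> moment by (intro summable_add summable_mult)
qed

lemma X0plus_summable:
  assumes "z \<in> X0plus"
  shows "summable (\<lambda>l. real (Suc l) * z (Suc l))" and "summable (\<lambda>l. z (Suc l))"
proof -
  have nonneg: "0 \<le> z (Suc l)" for l using assms by (simp add: X0plus_def)
  have "summable (\<lambda>l. real (Suc l) * \<bar>z (Suc l)\<bar>)" using assms unfolding X0plus_def by blast
  then show moment: "summable (\<lambda>l. real (Suc l) * z (Suc l))" using nonneg by simp
  show "summable (\<lambda>l. z (Suc l))"
    by (rule summable_comparison_test'[OF moment]) (use nonneg in \<open>simp add: distrib_right\<close>)
qed

lemma Nmass_pos:
  assumes "z \<in> X0plus" "z \<noteq> (\<lambda>_. 0)"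
  shows "0 < Nmass z"
proof -
  obtain m where "z m \<noteq> 0" using assms(2) by (auto simp: fun_eq_iff)
  moreover have "z 0 = 0" using assms(1) by (simp add: X0plus_def)
  ultimately obtain k where "z (Suc k) \<noteq> 0" by (metis not0_implies_Suc)
  then show ?thesis
    unfolding Nmass_def using X0plus_summable(2)[OF assms(1)] assms(1)
    by (intro suminf_pos2[of _ k]) (auto simp: X0plus_def order.strict_iff_order)
qed

lemma summable_Atilde_terms:
  fixes q :: "nat \<Rightarrow> real" and R B :: real
  assumes qt_pos: "\<forall>l\<ge>1. 0 < qt q R l"
    and qt_exp_lower: "\<forall>l\<ge>1. - ln (qt q R l) \<le> B * real l"
    and "summable (\<lambda>l. qt q R (Suc l))"
    and z: "z \<in> X0plus" "z \<noteq> (\<lambda>_. 0)"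
  shows "summable (\<lambda>l. z (Suc l) * ln (z (Suc l) / (qt q R (Suc l) * Nmass z)))"
proof (rule summable_x_ln_div)
  have "0 < Nmass z" using Nmass_pos[OF z] .
  show "- ln (qt q R (Suc l) * Nmass z) \<le> (B + \<bar>ln (Nmass z)\<bar>) * real (Suc l)" for l
  proof -
    have "- ln (qt q R (Suc l) * Nmass z) = - ln (qt q R (Suc l)) - ln (Nmass z)"
      using qt_pos[rule_format, of "Suc l"] \<open>0 < Nmass z\<close> by (simp add: ln_mult)
    also have "\<dots> \<le> B * real (Suc l) + \<bar>ln (Nmass z)\<bar> * real (Suc l)"
      using qt_exp_lower[rule_format, of "Suc l"]
        mult_left_mono[of 1 "real (Suc l)" "\<bar>ln (Nmass z)\<bar>"]
      by simp
    finally show ?thesis by (simp add: algebra_simps)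
  qed
  show "0 < qt q R (Suc l) * Nmass z" for l using qt_pos \<open>0 < Nmass z\<close> by simp
  show "0 \<le> z (Suc l)" for l using z by (simp add: X0plus_def)
  show "summable (\<lambda>l. qt q R (Suc l) * Nmass z)" using assms(3) by (rule summable_mult2)
  show "summable (\<lambda>l. real (Suc l) * z (Suc l))" using X0plus_summable(1)[OF z(1)] .
qed

lemma Atilde_pos:
  fixes q :: "nat \<Rightarrow> real" and R B :: real
  assumes qt_pos: "\<forall>l\<ge>1. 0 < qt q R l"
    and qt_exp_lower: "\<forall>l\<ge>1. - ln (qt q R l) \<le> B * real l"
    and neq: "NEQ q R"
    and z: "z \<in> X0plus" "z \<noteq> (\<lambda>_. 0)"
  shows "0 < Atilde q R z"
proof -
  define p where "p = (\<lambda>l. z (Suc l))"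
  define Q where "Q = (\<lambda>l. qt q R (Suc l))"
  define N where "N = Nmass z"
  let ?QN = "\<lambda>l. Q l * N"
  have "0 < N" unfolding N_def using Nmass_pos[OF z] .
  have p_nonneg: "0 \<le> p l" for l using z by (simp add: X0plus_def p_def)
  have moment: "summable (\<lambda>l. real (Suc l) * p l)" and "summable p"
    using X0plus_summable[OF z(1)] by (simp_all add: p_def)
  have "summable Q" using neq by (auto simp: NEQ_def Q_def)
  have QN_pos: "0 < ?QN l" for l using qt_pos \<open>0 < N\<close> by (simp add: Q_def)
  have QN_sum: "summable ?QN" "suminf ?QN = suminf Q * N"
    using \<open>summable Q\<close> by (auto intro: summable_mult2 suminf_mult2[symmetric])
  have "summable (\<lambda>l. p l * ln (p l / ?QN l))"
    using summable_Atilde_terms[OF qt_pos qt_exp_lower _ z] \<open>summable Q\<close>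
    by (simp add: p_def Q_def N_def)
  note gibbs = gibbs_inequality[OF p_nonneg QN_pos \<open>summable p\<close> QN_sum(1) this]
  have A: "Atilde q R z = (\<Sum>l. p l * ln (p l / ?QN l))"
    using z by (simp add: Atilde_def p_def Q_def N_def)
  have N: "suminf p = N" by (simp add: N_def Nmass_def p_def)
  from neq consider "suminf Q < 1" | "suminf Q = 1" "\<not> summable (\<lambda>l. real (Suc l) * Q l)"
    by (auto simp: NEQ_def Q_def)
  then show ?thesis
  proof cases
    case 1
    then have "0 < N - suminf Q * N" using \<open>0 < N\<close> by simp
    with gibbs(1) show ?thesis by (simp add: A N QN_sum)
  next
    case 2
    have "p \<noteq> ?QN"
    proof
      assume "p = ?QN"
      have "summable (\<lambda>l. real (Suc l) * p l / N)" using moment by (rule summable_divide)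
      with \<open>p = ?QN\<close> \<open>0 < N\<close> 2(2) show False by simp
    qed
    with gibbs(2) show ?thesis using 2(1) by (simp add: A N QN_sum)
  qed
qed

lemma LIMSEQ_div_real_zero_if_increments_zero:
  fixes f :: "nat \<Rightarrow> real"
  assumes "(\<lambda>n. f (Suc n) - f n) \<longlonglongrightarrow> 0"
  shows "(\<lambda>n. f n / real n) \<longlonglongrightarrow> 0"
proof (rule LIMSEQ_I)
  fix e :: real assume "0 < e"
  then obtain M where M: "\<And>n. n \<ge> M \<Longrightarrow> \<bar>f (Suc n) - f n\<bar> < e / 2"
    using LIMSEQ_D[OF assms, of "e / 2"] by auto
  have drift: "\<bar>f (M + k) - f M\<bar> \<le> real k * (e / 2)" for k
  proof (induction k)
    case (Suc k)
    have "\<bar>f (M + Suc k) - f M\<bar> \<le> \<bar>f (Suc (M + k)) - f (M + k)\<bar> + \<bar>f (M + k) - f M\<bar>"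
      by simp
    also have "\<dots> \<le> e / 2 + real k * (e / 2)" using M[of "M + k"] Suc.IH by simp
    finally show ?case by (simp add: algebra_simps)
  qed simp
  obtain K :: nat where K: "2 * \<bar>f M\<bar> / e < real K" using reals_Archimedean2 by blast
  show "\<exists>n0. \<forall>n\<ge>n0. norm (f n / real n - 0) < e"
  proof (intro exI allI impI)
    fix n assume n: "n \<ge> Suc (M + K)"
    then have "0 < real n" "real K * e \<le> real n * e" using \<open>0 < e\<close> by auto
    moreover have "2 * \<bar>f M\<bar> < real K * e" using K \<open>0 < e\<close> by (simp add: field_simps)
    ultimately have "\<bar>f M\<bar> < real n * (e / 2)" by simp
    have "\<bar>f n\<bar> \<le> \<bar>f M\<bar> + \<bar>f (M + (n - M)) - f M\<bar>" using n by simp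
    also have "\<dots> \<le> \<bar>f M\<bar> + real n * (e / 2)"
      using drift[of "n - M"] n \<open>0 < e\<close> by (auto intro: order_trans mult_right_mono)
    also have "\<dots> < real n * e" using \<open>\<bar>f M\<bar> < real n * (e / 2)\<close> by simp
    finally show "norm (f n / real n - 0) < e"
      using \<open>0 < real n\<close> by (simp add: abs_divide field_simps)
  qed
qed

lemma LIMSEQ_ln_div_real_zero_if_ratio_one:
  fixes a :: "nat \<Rightarrow> real"
  assumes pos: "eventually (\<lambda>n. 0 < a n) sequentially"
    and ratio: "(\<lambda>n. a (Suc n) / a n) \<longlonglongrightarrow> 1"
  shows "(\<lambda>n. ln (a n) / real n) \<longlonglongrightarrow> 0"
proof (rule LIMSEQ_div_real_zero_if_increments_zero)
  have "eventually (\<lambda>n. 0 < a (Suc n)) sequentially"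
    using pos by (rule eventually_sequentially_Suc[THEN iffD2])
  with pos have "eventually (\<lambda>n. ln (a (Suc n) / a n) = ln (a (Suc n)) - ln (a n)) sequentially"
    by eventually_elim (simp add: ln_div)
  moreover have "(\<lambda>n. ln (a (Suc n) / a n)) \<longlonglongrightarrow> ln 1"
    using ratio by (intro tendsto_ln) auto
  ultimately show "(\<lambda>n. ln (a (Suc n)) - ln (a n)) \<longlonglongrightarrow> 0"
    by (simp add: tendsto_cong)
qed

lemma qt_ratio_LIMSEQ_one:
  fixes q :: "nat \<Rightarrow> real" and R :: real
  assumes "(\<lambda>l. q l / q (Suc l)) \<longlonglongrightarrow> R" "R \<noteq> 0"
  shows "(\<lambda>l. qt q R (Suc l) / qt q R l) \<longlonglongrightarrow> 1"
proof -
  have "(\<lambda>l. R / (q l / q (Suc l))) \<longlonglongrightarrow> R / R"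
    using assms by (intro tendsto_intros) auto
  moreover have "qt q R (Suc l) / qt q R l = R / (q l / q (Suc l))" for l
    using \<open>R \<noteq> 0\<close> by (simp add: qt_def)
  ultimately show ?thesis using \<open>R \<noteq> 0\<close> by simp
qed

definition point_mass :: "real \<Rightarrow> nat \<Rightarrow> nat \<Rightarrow> real" where
  "point_mass r k = (\<lambda>l. if l = k then r / real k else 0)"

lemma sums_point_mass:
  assumes "1 \<le> k" "\<And>l. f 0 l = 0"
  shows "(\<lambda>l. f (point_mass r k (Suc l)) l) sums f (r / real k) (k - 1)"
proof -
  have "(\<lambda>l. f (point_mass r k (Suc l)) l) = (\<lambda>l. if l = k - 1 then f (r / real k) l else 0)"
    using assms by (auto simp: point_mass_def fun_eq_iff)
  then show ?thesis using sums_single[of "k - 1" "f (r / real k)"] by simp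
qed

lemma point_mass_in_X0plus: "0 \<le> r \<Longrightarrow> 1 \<le> k \<Longrightarrow> point_mass r k \<in> X0plus"
  using sums_point_mass[of k "\<lambda>x l. real (Suc l) * \<bar>x\<bar>" r]
  by (auto simp: X0plus_def point_mass_def sums_iff)

lemma rho_point_mass: "1 \<le> k \<Longrightarrow> rho (point_mass r k) = r"
  using sums_point_mass[of k "\<lambda>x l. real (Suc l) * x" r] by (simp add: rho_def sums_iff)

lemma Atilde_point_mass:
  assumes "0 < r" "1 \<le> k" "0 < qt q R k"
  shows "Atilde q R (point_mass r k) = - r * (ln (qt q R k) / real k)"
proof -
  have "point_mass r k k \<noteq> 0" using assms by (simp add: point_mass_def)
  then have nonzero: "point_mass r k \<noteq> (\<lambda>_. 0)" by force
  have "Nmass (point_mass r k) = r / real k"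
    using sums_point_mass[of k "\<lambda>x l. x" r] assms(2) by (simp add: Nmass_def sums_iff)
  moreover have "r / real k * ln (r / real k / (qt q R k * (r / real k)))
      = - r * (ln (qt q R k) / real k)"
    using assms by (simp add: ln_div)
  ultimately show ?thesis
    using sums_point_mass[of k "\<lambda>x l. x * ln (x / (qt q R (Suc l) * (r / real k)))" r]
      assms(2) nonzero
    by (simp add: Atilde_def sums_iff)
qed

theorem theorem9:
  fixes q :: "nat \<Rightarrow> real" and R rhostar :: real
  assumes qpos: "\<forall>l\<ge>1. 0 < q l"
    and q1: "q 1 = 1"
    and Rlim: "(\<lambda>l. q l / q (Suc l)) \<longlonglongrightarrow> R"
    and Rpos: "0 < R"
    and neq: "NEQ q R"
    and rhopos: "0 < rhostar"
  shows "(INF z\<in>{z \<in> X0plus. rho z = rhostar}. ereal (Atilde q R z)) = 0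
         \<and> \<not> (\<exists>z\<in>X0plus. rho z = rhostar \<and> Atilde q R z = 0)"
proof -
  have qt_pos: "\<forall>l\<ge>1. 0 < qt q R l" using qpos Rpos by (simp add: qt_def)
  have ln_qt: "(\<lambda>l. ln (qt q R l) / real l) \<longlonglongrightarrow> 0"
    using qt_pos qt_ratio_LIMSEQ_one[OF Rlim] Rpos
    by (intro LIMSEQ_ln_div_real_zero_if_ratio_one) (auto simp: eventually_sequentially)
  then have "Bseq (\<lambda>l. ln (qt q R l) / real l)" by (intro convergent_imp_Bseq convergentI)
  then obtain B where B: "\<And>l. norm (ln (qt q R l) / real l) \<le> B" by (meson BseqE)
  have qt_exp_lower: "\<forall>l\<ge>1. - ln (qt q R l) \<le> B * real l"
  proof (intro allI impI)
    fix l :: nat assume "1 \<le> l"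
    then have "- ln (qt q R l) \<le> \<bar>ln (qt q R l) / real l\<bar> * real l" by (simp add: abs_divide)
    also have "\<dots> \<le> B * real l" using B[of l] by (intro mult_right_mono) simp_all
    finally show "- ln (qt q R l) \<le> B * real l" .
  qed
  have pos: "0 < Atilde q R z" if "z \<in> X0plus" "rho z = rhostar" for z
  proof -
    have "z \<noteq> (\<lambda>_. 0)" using that(2) rhopos by (auto simp: rho_def)
    then show ?thesis by (rule Atilde_pos[OF qt_pos qt_exp_lower neq that(1)])
  qed
  let ?INF = "INF z\<in>{z \<in> X0plus. rho z = rhostar}. ereal (Atilde q R z)"
  have "?INF \<le> 0"
  proof (rule LIMSEQ_le_const)
    have "Atilde q R (point_mass rhostar (Suc j)) = - rhostar * (ln (qt q R (Suc j)) / real (Suc j))"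
      for j using qt_pos rhopos by (intro Atilde_point_mass) auto
    moreover have "(\<lambda>j. - rhostar * (ln (qt q R (Suc j)) / real (Suc j))) \<longlonglongrightarrow> - rhostar * 0"
      using LIMSEQ_Suc[OF ln_qt] by (intro tendsto_mult tendsto_const)
    ultimately show "(\<lambda>j. ereal (Atilde q R (point_mass rhostar (Suc j)))) \<longlonglongrightarrow> 0"
      unfolding zero_ereal_def by simp
    have "point_mass rhostar (Suc j) \<in> {z \<in> X0plus. rho z = rhostar}" for j
      using rhopos by (simp add: point_mass_in_X0plus rho_point_mass)
    then show "\<exists>N. \<forall>j\<ge>N. ?INF \<le> ereal (Atilde q R (point_mass rhostar (Suc j)))"
      by (blast intro: INF_lower)
  qed
  moreover have "0 \<le> ?INF" using pos by (intro INF_greatest) (simp add: less_imp_le)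
  ultimately have "?INF = 0" by (rule antisym)
  then show ?thesis using pos by fastforce
qed

end
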